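(* Let $\mathcal{M}\subset\mathbb{R}^n$ be a symmetric real algebraic variety, i.e. $\mathcal{M}=\{x\in\mathbb{R}^n:p(x)=0\}$ for some real polynomial $p$, and $\sigma\mathcal{M}=\mathcal{M}$ for every permutation $\sigma$ of the coordinates. Then $\lambda^{-1}(\mathcal{M})=\{X\in\mathbf{S}^n:\lambda(X)\in\mathcal{M}\}$ is an algebraic variety of $\mathbf{S}^n$, i.e. the zero set of a polynomial in the entries of $X$.
   Context: $\mathbf{S}^n$ is the space of real symmetric $n\times n$ matrices; $\lambda(X)\in\mathbb{R}^n$ is the vector of eigenvalues of $X$ counted with multiplicity and ordered nonincreasingly. Permutations act on $\mathbb{R}^n$ by permuting coordinates: $(\sigma x)_i=x_{\sigma^{-1}(i)}$. *)

theory Defs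
  imports "Jordan_Normal_Form.Char_Poly"
begin

inductive_set polyfun :: "'v set \<Rightarrow> (('v \<Rightarrow> real) \<Rightarrow> real) set" for V :: "'v set" where
  pf_const: "(\<lambda>x. c) \<in> polyfun V"
| pf_var: "v \<in> V \<Longrightarrow> (\<lambda>x. x v) \<in> polyfun V"
| pf_add: "p \<in> polyfun V \<Longrightarrow> q \<in> polyfun V \<Longrightarrow> (\<lambda>x. p x + q x) \<in> polyfun V"
| pf_mult: "p \<in> polyfun V \<Longrightarrow> q \<in> polyfun V \<Longrightarrow> (\<lambda>x. p x * q x) \<in> polyfun V"

definition perm_vec :: "(nat \<Rightarrow> nat) \<Rightarrow> real vec \<Rightarrow> real vec" where
  "perm_vec \<sigma> x = vec (dim_vec x) (\<lambda>i. x $ (Hilbert_Choice.inv \<sigma> i))"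

definition eigvals :: "real mat \<Rightarrow> real vec" where
  "eigvals X = (THE l. l \<in> carrier_vec (dim_row X)
      \<and> (\<forall>i j. i \<le> j \<and> j < dim_row X \<longrightarrow> l $ j \<le> l $ i)
      \<and> char_poly X = (\<Prod>i<dim_row X. [:- (l $ i), 1:]))"

end

theory Submission
  imports Defs "Jordan_Normal_Form.Schur_Decomposition"
begin

(* Since M is symmetric, lambda(X) is in M iff p(y) = 0 for some rearrangement y of the
   eigenvalues of X, i.e. for some y with prod_j (t - y_j) = det (t I - X). Both conditions are
   expressed by the vanishing of a single sum of squares F(X, y), polynomial in X and y.
   The y_j are then eliminated one at a time, each ranging over the (real, as X is symmetric)
   eigenvalues of X: writing f(X, y_j) = sum_k c_k(X) y_j^k, a Schur triangularization of X
   gives det (sum_k c_k(X) X^k) = prod_e f(X, e), the product over the eigenvalues e of X with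
   multiplicity. This is polynomial in the entries of X and vanishes iff f(X, e) = 0 for some
   eigenvalue e. *)

section \<open>Polynomial functions\<close>

lemma polyfun_cong: "f \<in> polyfun V \<Longrightarrow> (\<And>v. v \<in> V \<Longrightarrow> x v = y v) \<Longrightarrow> f x = f y"
  by (induction f rule: polyfun.induct) auto

lemma polyfun_compose:
  "f \<in> polyfun V \<Longrightarrow> (\<And>v. v \<in> V \<Longrightarrow> (\<lambda>x. s v x) \<in> polyfun W) \<Longrightarrow> (\<lambda>x. f (\<lambda>v. s v x)) \<in> polyfun W"
  by (induction f rule: polyfun.induct) (auto intro: polyfun.intros)

lemma polyfun_diff: "f \<in> polyfun V \<Longrightarrow> g \<in> polyfun V \<Longrightarrow> (\<lambda>x. f x - g x) \<in> polyfun V"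
  using polyfun.pf_add[OF _ polyfun.pf_mult[OF polyfun.pf_const, of g V "-1"], of f] by simp

lemma polyfun_sum:
  "finite S \<Longrightarrow> (\<And>i. i \<in> S \<Longrightarrow> f i \<in> polyfun V) \<Longrightarrow> (\<lambda>x. \<Sum>i\<in>S. f i x) \<in> polyfun V"
  by (induction S rule: finite_induct) (auto intro: polyfun.intros)

lemma polyfun_prod:
  "finite S \<Longrightarrow> (\<And>i. i \<in> S \<Longrightarrow> f i \<in> polyfun V) \<Longrightarrow> (\<lambda>x. \<Prod>i\<in>S. f i x) \<in> polyfun V"
  by (induction S rule: finite_induct) (auto intro: polyfun.intros)

lemma polyfun_power2: "f \<in> polyfun V \<Longrightarrow> (\<lambda>x. (f x)\<^sup>2) \<in> polyfun V"
  using polyfun.pf_mult[of f V f] by (simp add: power2_eq_square)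

lemma polyfun_det:
  assumes "\<And>x. A x \<in> carrier_mat n n"
    and "\<And>i j. i < n \<Longrightarrow> j < n \<Longrightarrow> (\<lambda>x. A x $$ (i, j)) \<in> polyfun V"
  shows "(\<lambda>x. det (A x)) \<in> polyfun V"
proof -
  have "(\<lambda>x. det (A x))
      = (\<lambda>x. \<Sum>p\<in>{p. p permutes {0..<n}}. signof p * (\<Prod>i = 0..<n. A x $$ (i, p i)))"
    using det_def'[OF assms(1)] by auto
  also have "\<dots> \<in> polyfun V"
    using assms(2) permutes_in_image
    by (fastforce intro!: polyfun_sum polyfun_prod polyfun.pf_mult polyfun.pf_const
        simp: finite_permutations)
  finally show ?thesis .
qed

lemma polyfun_poly_in_var:
  assumes "f \<in> polyfun (insert v U)"
  shows "\<exists>P d. (\<forall>x. degree (P x) \<le> d) \<and> (\<forall>k. (\<lambda>x. coeff (P x) k) \<in> polyfun U)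
           \<and> (\<forall>x. f x = poly (P x) (x v))"
  using assms
proof (induction f rule: polyfun.induct)
  case (pf_const c)
  show ?case
    by (intro exI[of _ "\<lambda>x. [:c:]"] exI[of _ 0]) (auto intro: polyfun.pf_const)
next
  case (pf_var w)
  show ?case
  proof (cases "w = v")
    case True
    have "(\<lambda>x. coeff [:0, 1:] k) \<in> polyfun U" for k :: nat
      by (rule polyfun.pf_const)
    then show ?thesis
      using True by (intro exI[of _ "\<lambda>x. [:0, 1:]"] exI[of _ 1]) auto
  next
    case False
    with pf_var have "(\<lambda>x. coeff [:x w:] k) \<in> polyfun U" for k
      by (cases k) (auto intro: polyfun.intros)
    then show ?thesis by (intro exI[of _ "\<lambda>x. [:x w:]"] exI[of _ 0]) auto
  qed
next
  case (pf_add p q)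
  then obtain P d Q e where
    "\<forall>x. degree (P x) \<le> d" "\<forall>k. (\<lambda>x. coeff (P x) k) \<in> polyfun U" "\<forall>x. p x = poly (P x) (x v)"
    "\<forall>x. degree (Q x) \<le> e" "\<forall>k. (\<lambda>x. coeff (Q x) k) \<in> polyfun U" "\<forall>x. q x = poly (Q x) (x v)"
    by blast
  then show ?case
    by (intro exI[of _ "\<lambda>x. P x + Q x"] exI[of _ "max d e"])
      (auto intro!: polyfun.pf_add degree_add_le
        intro: order.trans[OF _ max.cobounded1] order.trans[OF _ max.cobounded2])
next
  case (pf_mult p q)
  then obtain P d Q e where
    "\<forall>x. degree (P x) \<le> d" "\<forall>k. (\<lambda>x. coeff (P x) k) \<in> polyfun U" "\<forall>x. p x = poly (P x) (x v)"
    "\<forall>x. degree (Q x) \<le> e" "\<forall>k. (\<lambda>x. coeff (Q x) k) \<in> polyfun U" "\<forall>x. q x = poly (Q x) (x v)"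
    by blast
  then show ?case
    by (intro exI[of _ "\<lambda>x. P x * Q x"] exI[of _ "d + e"])
      (auto simp: coeff_mult intro!: polyfun_sum polyfun.pf_mult
        intro: order.trans[OF degree_mult_le add_mono])
qed

section \<open>Polynomials evaluated at a matrix\<close>

definition horner_mat :: "nat \<Rightarrow> 'a :: comm_ring_1 list \<Rightarrow> 'a mat \<Rightarrow> 'a mat" where
  "horner_mat n cs A = foldr (\<lambda>c M. c \<cdot>\<^sub>m 1\<^sub>m n + A * M) cs (0\<^sub>m n n)"

lemma horner_mat_Nil [simp]: "horner_mat n [] A = 0\<^sub>m n n"
  and horner_mat_Cons [simp]: "horner_mat n (c # cs) A = c \<cdot>\<^sub>m 1\<^sub>m n + A * horner_mat n cs A"
  by (simp_all add: horner_mat_def)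

lemma horner_mat_carrier [simp]: "A \<in> carrier_mat n n \<Longrightarrow> horner_mat n cs A \<in> carrier_mat n n"
  by (induction cs) auto

lemma mult_conjugate_mat:
  fixes P :: "'a :: semiring_1 mat"
  assumes "P \<in> carrier_mat n n" "Q \<in> carrier_mat n n" "A \<in> carrier_mat n n" "B \<in> carrier_mat n n"
    and "Q * P = 1\<^sub>m n"
  shows "P * A * Q * (P * B * Q) = P * (A * B) * Q"
proof -
  have "P * A * Q * (P * B * Q) = P * A * (Q * P) * B * Q"
    using assms(1-4) by (simp add: assoc_mult_mat[of _ n n _ n _ n])
  also have "\<dots> = P * A * B * Q"
    using assms by (simp add: right_mult_one_mat[of "P * A" n n])
  also have "\<dots> = P * (A * B) * Q"
    using assms(1-4) by simp
  finally show ?thesis .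
qed

lemma horner_mat_similar:
  assumes B: "B \<in> carrier_mat n n" and P: "P \<in> carrier_mat n n" and Q: "Q \<in> carrier_mat n n"
    and PQ: "P * Q = 1\<^sub>m n" and QP: "Q * P = 1\<^sub>m n" and APBQ: "A = P * B * Q"
  shows "horner_mat n cs A = P * horner_mat n cs B * Q"
proof (induction cs)
  case Nil
  show ?case using P Q by simp
next
  case (Cons c cs)
  let ?H = "horner_mat n cs B" and ?c = "c \<cdot>\<^sub>m 1\<^sub>m n"
  have H: "?H \<in> carrier_mat n n" and BH: "B * ?H \<in> carrier_mat n n"
    using B by simp_all
  have "P * ?c * Q = c \<cdot>\<^sub>m (P * Q)"
    using P Q by (simp add: mult_smult_distrib[OF P one_carrier_mat] mult_smult_assoc_mat)
  then have scalar: "P * ?c * Q = ?c"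
    by (simp add: PQ)
  have "horner_mat n (c # cs) A = ?c + P * B * Q * (P * ?H * Q)"
    by (subst horner_mat_Cons, subst Cons) (simp only: APBQ)
  also have "\<dots> = P * ?c * Q + P * (B * ?H) * Q"
    by (simp only: scalar mult_conjugate_mat[OF P Q B H QP])
  also have "\<dots> = (P * ?c + P * (B * ?H)) * Q"
    using P Q BH by (simp add: add_mult_distrib_mat[of _ n n _ Q n])
  also have "\<dots> = P * horner_mat n (c # cs) B * Q"
    by (subst horner_mat_Cons, subst mult_add_distrib_mat[OF P _ BH]) simp_all
  finally show ?case .
qed

lemma upper_triangular_mult:
  assumes A: "A \<in> carrier_mat n n" "upper_triangular A"
    and B: "B \<in> carrier_mat n n" "upper_triangular B"
  shows "upper_triangular (A * B)"
    and "i < n \<Longrightarrow> (A * B) $$ (i, i) = A $$ (i, i) * B $$ (i, i)"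
proof -
  have AB: "(A * B) $$ (i, j) = (\<Sum>k\<in>{0..<n}. A $$ (i, k) * B $$ (k, j))" if "i < n" "j < n" for i j
    using A B that by (simp add: scalar_prod_def)
  have vanish: "A $$ (i, k) * B $$ (k, j) = 0" if "i < n" "k < n" "j \<le> i" "k \<noteq> i \<or> j < i" for i j k
    using that upper_triangularD[OF A(2), of k i] upper_triangularD[OF B(2), of j k] A(1) B(1)
    by (cases "k < i") (auto simp: carrier_matD)
  show "upper_triangular (A * B)"
  proof
    fix i j assume ij: "j < i" "i < dim_row (A * B)"
    then have "(A * B) $$ (i, j) = (\<Sum>k\<in>{0..<n}. A $$ (i, k) * B $$ (k, j))"
      using A(1) by (intro AB) auto
    also have "\<dots> = 0"
      using ij A(1) by (auto simp: vanish intro!: sum.neutral)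
    finally show "(A * B) $$ (i, j) = 0" .
  qed
  show "(A * B) $$ (i, i) = A $$ (i, i) * B $$ (i, i)" if "i < n"
    using that by (simp add: AB vanish sum.remove[of _ i] sum.neutral)
qed

lemma horner_mat_upper_triangular:
  assumes B: "B \<in> carrier_mat n n" "upper_triangular B"
  shows "upper_triangular (horner_mat n cs B)
    \<and> (\<forall>i<n. horner_mat n cs B $$ (i, i) = poly (Poly cs) (B $$ (i, i)))"
proof (induction cs)
  case (Cons c cs)
  let ?H = "horner_mat n cs B"
  have H: "?H \<in> carrier_mat n n" using B by simp
  have BH: "upper_triangular (B * ?H)" "\<And>i. i < n \<Longrightarrow> (B * ?H) $$ (i, i) = B $$ (i, i) * ?H $$ (i, i)"
    using upper_triangular_mult[OF B H] Cons by auto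
  have entry: "(c \<cdot>\<^sub>m 1\<^sub>m n + B * ?H) $$ (i, j) = (if i = j then c else 0) + (B * ?H) $$ (i, j)"
    if "i < n" "j < n" for i j
    using that B carrier_matD[OF H] by (subst index_add_mat) auto
  show ?case
    using B BH Cons upper_triangularD[OF BH(1)] by (auto simp: entry intro!: upper_triangularI)
qed simp

lemma det_horner_mat:
  fixes A :: "'a :: conjugatable_ordered_field mat"
  assumes A: "A \<in> carrier_mat n n" and char_poly: "char_poly A = (\<Prod>e\<leftarrow>es. [:- e, 1:])"
  shows "det (horner_mat n cs A) = (\<Prod>e\<leftarrow>es. poly (Poly cs) e)"
proof -
  obtain B P Q where schur: "schur_decomposition A es = (B, P, Q)"
    by (cases "schur_decomposition A es") auto
  from schur_decomposition[OF A char_poly schur] have wit: "similar_mat_wit A B P Q"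
    and ut: "upper_triangular B" and diag: "diag_mat B = es" by auto
  from similar_mat_witD2[OF A wit] have B: "B \<in> carrier_mat n n" and P: "P \<in> carrier_mat n n"
    and Q: "Q \<in> carrier_mat n n" and PQ: "P * Q = 1\<^sub>m n" and QP: "Q * P = 1\<^sub>m n"
    and APBQ: "A = P * B * Q" by auto
  let ?H = "horner_mat n cs B"
  have H: "?H \<in> carrier_mat n n" using B by simp
  have "det (horner_mat n cs A) = det P * det Q * det ?H"
    using horner_mat_similar[OF B P Q PQ QP APBQ] P Q H by (simp add: det_mult[of _ n])
  also have "det P * det Q = 1"
    using det_mult[OF P Q] PQ by simp
  also have "det ?H = prod_list (diag_mat ?H)"
    using det_upper_triangular[OF _ H] horner_mat_upper_triangular[OF B ut] by simp
  also have "diag_mat ?H = map (\<lambda>e. poly (Poly cs) e) es"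
    using horner_mat_upper_triangular[OF B ut] carrier_matD[OF B] carrier_matD[OF H] diag[symmetric]
    by (auto simp: diag_mat_def intro!: nth_equalityI)
  finally show ?thesis by (simp add: comp_def)
qed

lemma polyfun_horner_mat_entry:
  assumes A: "\<And>x. A x \<in> carrier_mat n n"
    and A_entries: "\<And>i j. i < n \<Longrightarrow> j < n \<Longrightarrow> (\<lambda>x. A x $$ (i, j)) \<in> polyfun V"
    and c: "\<And>k. (\<lambda>x. c x k) \<in> polyfun V"
    and ij: "i < n" "j < n"
  shows "(\<lambda>x. horner_mat n (map (c x) ks) (A x) $$ (i, j)) \<in> polyfun V"
  using ij
proof (induction ks arbitrary: i j)
  case Nil
  then show ?case by (simp add: polyfun.pf_const)
next
  case (Cons k ks)
  have "horner_mat n (map (c x) (k # ks)) (A x) $$ (i, j) = c x k * (if i = j then 1 else 0)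
      + (\<Sum>l\<in>{0..<n}. A x $$ (i, l) * horner_mat n (map (c x) ks) (A x) $$ (l, j))" for x
    using A[of x] carrier_matD[OF horner_mat_carrier[OF A[of x]]] Cons.prems
    by (subst list.map, subst horner_mat_Cons, subst index_add_mat)
      (auto simp: scalar_prod_def)
  moreover have "(\<lambda>x. c x k * (if i = j then 1 else 0)
      + (\<Sum>l\<in>{0..<n}. A x $$ (i, l) * horner_mat n (map (c x) ks) (A x) $$ (l, j))) \<in> polyfun V"
    using Cons
    by (auto intro!: polyfun.pf_add polyfun.pf_mult polyfun.pf_const polyfun_sum c A_entries)
  ultimately show ?case by simp
qed

section \<open>Eliminating variables over the spectrum\<close>

lemma Poly_coeff_upto: "degree p \<le> d \<Longrightarrow> Poly (map (coeff p) [0..<Suc d]) = p"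
  by (rule poly_eqI) (auto simp: nth_default_def coeff_eq_0 simp del: upt_Suc)

lemma eliminate_variable:
  fixes f :: "(nat \<times> nat \<Rightarrow> real) \<Rightarrow> real"
  assumes f: "f \<in> polyfun (insert v U)" and v: "v \<notin> U" and entries: "{..<n} \<times> {..<n} \<subseteq> U"
  shows "\<exists>g \<in> polyfun U. \<forall>x es. char_poly (mat n n x) = (\<Prod>e\<leftarrow>es. [:- e, 1:]) \<longrightarrow>
            (g x = 0 \<longleftrightarrow> (\<exists>e\<in>set es. f (x(v := e)) = 0))"
proof -
  obtain P d where deg: "\<And>x. degree (P x) \<le> d" and coeff: "\<And>k. (\<lambda>x. coeff (P x) k) \<in> polyfun U"
    and f_poly: "\<And>x. f x = poly (P x) (x v)"
    using polyfun_poly_in_var[OF f] by blast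
  define g where "g x = det (horner_mat n (map (coeff (P x)) [0..<Suc d]) (mat n n x))" for x
  have "g \<in> polyfun U"
    unfolding g_def using entries
    by (intro polyfun_det[of _ n] polyfun_horner_mat_entry[of _ n] coeff)
      (auto intro: polyfun.pf_var)
  moreover have "g x = 0 \<longleftrightarrow> (\<exists>e\<in>set es. f (x(v := e)) = 0)"
    if char_poly: "char_poly (mat n n x) = (\<Prod>e\<leftarrow>es. [:- e, 1:])" for x es
  proof -
    have "P (x(v := e)) = P x" for e
      by (rule poly_eqI, rule polyfun_cong[OF coeff]) (use v in auto)
    then have "f (x(v := e)) = poly (P x) e" for e
      by (simp add: f_poly)
    moreover have "g x = (\<Prod>e\<leftarrow>es. poly (P x) e)"
      unfolding g_def
      by (subst det_horner_mat[OF _ char_poly]) (simp_all add: Poly_coeff_upto deg del: upt_Suc)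
    ultimately show ?thesis by (auto simp: prod_list_zero_iff image_iff)
  qed
  ultimately show ?thesis by blast
qed

lemma eliminate_variables:
  fixes f :: "(nat \<times> nat \<Rightarrow> real) \<Rightarrow> real"
  assumes "finite W" and "f \<in> polyfun (U \<union> W)" and "U \<inter> W = {}" and entries: "{..<n} \<times> {..<n} \<subseteq> U"
  shows "\<exists>g \<in> polyfun U. \<forall>x es. char_poly (mat n n x) = (\<Prod>e\<leftarrow>es. [:- e, 1:]) \<longrightarrow>
            (g x = 0 \<longleftrightarrow> (\<exists>y. (\<forall>w\<in>W. y w \<in> set es) \<and> f (override_on x y W) = 0))"
  using assms(1-3)
proof (induction W arbitrary: f rule: finite_induct)
  case empty
  then show ?case by auto
next
  case (insert w W)
  from insert.prems have "f \<in> polyfun (insert w (U \<union> W))" "w \<notin> U \<union> W"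
    using insert.hyps by auto
  from eliminate_variable[OF this] entries obtain h where h: "h \<in> polyfun (U \<union> W)"
    and h_zero: "\<And>x es. char_poly (mat n n x) = (\<Prod>e\<leftarrow>es. [:- e, 1:]) \<Longrightarrow>
      h x = 0 \<longleftrightarrow> (\<exists>e\<in>set es. f (x(w := e)) = 0)"
    by blast
  from insert.IH[OF h] insert.prems obtain g where g: "g \<in> polyfun U"
    and g_zero: "\<And>x es. char_poly (mat n n x) = (\<Prod>e\<leftarrow>es. [:- e, 1:]) \<Longrightarrow>
      g x = 0 \<longleftrightarrow> (\<exists>y. (\<forall>w\<in>W. y w \<in> set es) \<and> h (override_on x y W) = 0)"
    by blast
  have mat_override: "mat n n (override_on x y W) = mat n n x" for x y :: "nat \<times> nat \<Rightarrow> real"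
    using entries insert.prems(2) by (intro eq_matI) (auto simp: override_on_def)
  have override_insert: "(override_on x y W)(w := e) = override_on x (y(w := e)) (insert w W)"
    for x y :: "nat \<times> nat \<Rightarrow> real" and e
    using insert.hyps(2) by (auto simp: override_on_def)
  show ?case
  proof (intro bexI[OF _ g] allI impI)
    fix x :: "nat \<times> nat \<Rightarrow> real" and es
    assume char_poly: "char_poly (mat n n x) = (\<Prod>e\<leftarrow>es. [:- e, 1:])"
    let ?f = "\<lambda>y. f (override_on x y (insert w W))"
    have "g x = 0 \<longleftrightarrow> (\<exists>y. (\<forall>w\<in>W. y w \<in> set es) \<and> (\<exists>e\<in>set es. ?f (y(w := e)) = 0))"
      using g_zero[OF char_poly] h_zero char_poly by (simp add: mat_override override_insert)
    also have "\<dots> \<longleftrightarrow> (\<exists>y. (\<forall>w\<in>insert w W. y w \<in> set es) \<and> ?f y = 0)"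
    proof
      assume "\<exists>y. (\<forall>w\<in>W. y w \<in> set es) \<and> (\<exists>e\<in>set es. ?f (y(w := e)) = 0)"
      then obtain y e where "\<forall>w\<in>W. y w \<in> set es" "e \<in> set es" "?f (y(w := e)) = 0"
        by blast
      then show "\<exists>y. (\<forall>w\<in>insert w W. y w \<in> set es) \<and> ?f y = 0"
        using insert.hyps(2) by (intro exI[of _ "y(w := e)"]) auto
    next
      assume "\<exists>y. (\<forall>w\<in>insert w W. y w \<in> set es) \<and> ?f y = 0"
      then obtain y where "\<forall>w\<in>insert w W. y w \<in> set es" "?f y = 0"
        by blast
      then show "\<exists>y. (\<forall>w\<in>W. y w \<in> set es) \<and> (\<exists>e\<in>set es. ?f (y(w := e)) = 0)"
        by (intro exI[of _ y]) (auto intro!: bexI[of _ "y w"])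
    qed
    finally show "g x = 0 \<longleftrightarrow> (\<exists>y. (\<forall>w\<in>insert w W. y w \<in> set es) \<and> ?f y = 0)" .
  qed
qed

section \<open>Spectra of real symmetric matrices\<close>

lemma order_linear_factors:
  "Polynomial.order a (\<Prod>e\<leftarrow>es. [:- e, 1:]) = count (mset es) (a :: 'a :: idom)"
proof (induction es)
  case (Cons e es)
  define P where "P = (\<Prod>e\<leftarrow>es. [:- e, 1:] :: 'a poly)"
  have "P \<noteq> 0"
    by (auto simp: P_def prod_list_zero_iff)
  then have nonzero: "[:- e, 1:] * P \<noteq> 0"
    by (simp only: mult_eq_0_iff pCons_eq_0_iff) simp
  have "Polynomial.order a (\<Prod>e\<leftarrow>e # es. [:- e, 1:]) = Polynomial.order a ([:- e, 1:] * P)"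
    by (simp add: P_def)
  also have "\<dots> = Polynomial.order a [:- e, 1:] + Polynomial.order a P"
    by (rule order_mult[OF nonzero])
  also have "\<dots> = count (mset (e # es)) a"
    using order_power_n_n[of e 1] order_root[of "[:- e, 1:]" a] Cons.IH by (auto simp: P_def)
  finally show ?case .
qed simp

lemma linear_factors_eq_iff_mset:
  "(\<Prod>e\<leftarrow>es. [:- e, 1:]) = (\<Prod>e\<leftarrow>es'. [:- e, 1:] :: 'a :: idom poly) \<longleftrightarrow> mset es = mset es'"
proof
  assume "(\<Prod>e\<leftarrow>es. [:- e, 1:]) = (\<Prod>e\<leftarrow>es'. [:- e, 1:] :: 'a poly)"
  then show "mset es = mset es'"
    by (intro multiset_eqI) (metis order_linear_factors)
qed (metis mset_map prod_mset_prod_list)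

lemma symmetric_mat_eigenvalue_real:
  fixes X :: "real mat"
  assumes X: "X \<in> carrier_mat n n" and sym: "transpose_mat X = X"
    and eigenvalue: "eigenvalue (map_mat complex_of_real X) a"
  shows "a \<in> \<real>"
proof -
  let ?X = "map_mat complex_of_real X"
  from eigenvalue obtain v where v: "v \<in> carrier_vec n" and "v \<noteq> 0\<^sub>v n" and Xv: "?X *\<^sub>v v = a \<cdot>\<^sub>v v"
    unfolding eigenvalue_def eigenvector_def using X by auto
  then obtain i where i: "i < n" and "v $ i \<noteq> 0" by (auto simp: vec_eq_iff)
  have X_sym: "X $$ (i, j) = X $$ (j, i)" if "i < n" "j < n" for i j
    using X that arg_cong[OF sym, of "\<lambda>A. A $$ (j, i)"] by simp
  have Xv_i: "(\<Sum>j<n. of_real (X $$ (i, j)) * v $ j) = a * v $ i" if "i < n" for i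
    using arg_cong[OF Xv, of "\<lambda>w. w $ i"] X v that by (simp add: scalar_prod_def atLeast0LessThan)
  define S where "S = (\<Sum>i<n. cnj (v $ i) * (\<Sum>j<n. of_real (X $$ (i, j)) * v $ j))"
  define N where "N = (\<Sum>i<n. cnj (v $ i) * v $ i)"
  have "S = a * N"
    unfolding S_def N_def by (simp add: Xv_i sum_distrib_left mult.left_commute)
  moreover have "cnj S = S"
  proof -
    have "cnj S = (\<Sum>i<n. \<Sum>j<n. cnj (v $ j) * (of_real (X $$ (j, i)) * v $ i))"
      unfolding S_def by (auto simp: cnj_sum sum_distrib_left X_sym mult_ac intro!: sum.cong)
    also have "\<dots> = S"
      unfolding S_def sum_distrib_left by (rule sum.swap)
    finally show ?thesis .
  qed
  moreover have "cnj N = N"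
    unfolding N_def by (simp add: cnj_sum mult.commute)
  moreover have "N \<noteq> 0"
  proof -
    have "Re N = (\<Sum>i<n. (cmod (v $ i))\<^sup>2)"
      unfolding N_def Re_sum by (intro sum.cong) (simp_all add: cmod_power2 flip: power2_eq_square)
    also have "\<dots> > 0"
      by (rule sum_pos2[of _ i]) (use i \<open>v $ i \<noteq> 0\<close> in auto)
    finally show ?thesis by auto
  qed
  ultimately have "cnj a = a"
    by (metis complex_cnj_mult mult_cancel_right)
  then show ?thesis
    using Reals_cnj_iff by blast
qed

interpretation of_real_poly_hom: map_poly_inj_idom_hom "of_real :: real \<Rightarrow> complex" ..

lemma symmetric_mat_char_poly_linear_factors:
  fixes X :: "real mat"
  assumes X: "X \<in> carrier_mat n n" and sym: "transpose_mat X = X"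
  obtains es where "char_poly X = (\<Prod>e\<leftarrow>es. [:- e, 1:])"
proof -
  let ?X = "map_mat complex_of_real X"
  obtain as where as: "char_poly ?X = (\<Prod>a\<leftarrow>as. [:- a, 1:])"
    using char_poly_factorized[of ?X n] X by auto
  have "a \<in> \<real>" if "a \<in> set as" for a
  proof (rule symmetric_mat_eigenvalue_real[OF X sym])
    show "eigenvalue ?X a"
      using eigenvalue_root_char_poly[of ?X n a] X that by (simp add: as linear_poly_root)
  qed
  then have "map_poly complex_of_real (\<Prod>e\<leftarrow>map Re as. [:- e, 1:]) = (\<Prod>a\<leftarrow>as. [:- a, 1:])"
    by (auto simp: of_real_poly_hom.hom_prod_list comp_def complex_is_Real_iff
        intro!: arg_cong[of _ _ prod_list])
  also have "\<dots> = map_poly complex_of_real (char_poly X)"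
    using as of_real_hom.char_poly_hom[OF X] by metis
  finally show thesis
    using that of_real_poly_hom.eq_iff by metis
qed

lemma eigvals_linear_factors:
  fixes X :: "real mat"
  assumes X: "X \<in> carrier_mat n n" and char_poly: "char_poly X = (\<Prod>e\<leftarrow>es. [:- e, 1:])"
  shows "eigvals X \<in> carrier_vec n" and "mset (list_of_vec (eigvals X)) = mset es"
proof -
  have "length es = n"
    using degree_monic_char_poly[OF X] degree_linear_factors[of uminus es] char_poly by simp
  define ordered_spectrum where "ordered_spectrum l \<longleftrightarrow>
    l \<in> carrier_vec n \<and> sorted (rev (list_of_vec l)) \<and> mset (list_of_vec l) = mset es" for l
  have eigvals_pred: "(l \<in> carrier_vec (dim_row X) \<and> (\<forall>i j. i \<le> j \<and> j < dim_row X \<longrightarrow> l $ j \<le> l $ i)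
      \<and> char_poly X = (\<Prod>i<dim_row X. [:- (l $ i), 1:])) \<longleftrightarrow> ordered_spectrum l" for l
  proof (cases "l \<in> carrier_vec n")
    case True
    have "(\<Prod>i<n. [:- (l $ i), 1:]) = (\<Prod>e\<leftarrow>list_of_vec l. [:- e, 1:])"
      using True by (simp add: list_of_vec_map prod.list_conv_set_nth atLeast0LessThan)
    moreover have "(\<forall>i j. i \<le> j \<and> j < n \<longrightarrow> l $ j \<le> l $ i) \<longleftrightarrow> sorted (rev (list_of_vec l))"
      using True by (auto simp: sorted_rev_iff_nth_mono)
    ultimately show ?thesis
      using X True linear_factors_eq_iff_mset[of es "list_of_vec l"]
      unfolding ordered_spectrum_def char_poly by auto
  qed (use X in \<open>simp add: ordered_spectrum_def\<close>)
  define l where "l = vec_of_list (rev (sort es))"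
  have "list_of_vec l = rev (sort es)"
    by (simp add: l_def list_vec)
  then have "ordered_spectrum l"
    unfolding ordered_spectrum_def using \<open>length es = n\<close>
    by (simp add: carrier_vecI flip: length_list_of_vec)
  moreover have "l' = l" if "ordered_spectrum l'" for l'
  proof -
    have "rev (list_of_vec l') = sort es"
      using that unfolding ordered_spectrum_def by (intro properties_for_sort[symmetric]) simp_all
    then show ?thesis by (metis l_def rev_rev_ident vec_list)
  qed
  ultimately have "eigvals X = l"
    unfolding eigvals_def eigvals_pred by (rule the_equality)
  with \<open>ordered_spectrum l\<close>
  show "eigvals X \<in> carrier_vec n" "mset (list_of_vec (eigvals X)) = mset es"
    unfolding ordered_spectrum_def by auto
qed

section \<open>A polynomial certificate for the spectrum\<close>

lemma polyfun_poly_char_poly: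
  assumes "{..<n} \<times> {..<n} \<subseteq> V"
  shows "(\<lambda>x. poly (char_poly (mat n n x)) c) \<in> polyfun V"
proof -
  have "poly (char_poly (mat n n x)) c = det (- char_matrix (mat n n x) c)"
    for x :: "nat \<times> nat \<Rightarrow> real"
    by (rule char_poly_matrix[of _ n]) simp
  moreover have "(\<lambda>x. det (- char_matrix (mat n n x) c)) \<in> polyfun V"
  proof (rule polyfun_det[of _ n])
    fix i j assume "i < n" "j < n"
    then have "(- char_matrix (mat n n x) c) $$ (i, j)
        = - 1 * (x (i, j) + - c * (if i = j then 1 else 0))"
      for x :: "nat \<times> nat \<Rightarrow> real"
      by (simp add: char_matrix_def)
    moreover have "(\<lambda>x. - 1 * (x (i, j) + - c * (if i = j then 1 else 0))) \<in> polyfun V"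
      using assms \<open>i < n\<close> \<open>j < n\<close>
      by (intro polyfun.pf_mult polyfun.pf_add polyfun.pf_const polyfun.pf_var) auto
    ultimately show "(\<lambda>x. (- char_matrix (mat n n x) c) $$ (i, j)) \<in> polyfun V"
      by simp
  qed (simp add: char_matrix_def)
  ultimately show ?thesis by simp
qed

lemma poly_eqI_degree_card:
  fixes p q :: "'a :: idom poly"
  assumes "degree p = n" "degree q = n" "lead_coeff p = lead_coeff q"
    and "finite S" "n \<le> card S" "\<And>s. s \<in> S \<Longrightarrow> poly p s = poly q s"
  shows "p = q"
proof (rule ccontr)
  assume "p \<noteq> q"
  then have nonzero: "p - q \<noteq> 0" by simp
  have "degree (p - q) \<noteq> n"
    using assms(1-3) nonzero by (metis coeff_diff diff_self leading_coeff_0_iff)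
  with degree_diff_le[of p n q] assms(1,2) have "degree (p - q) < n" by simp
  moreover have "card S \<le> card {s. poly (p - q) s = 0}"
    using assms(6) by (intro card_mono[OF poly_roots_finite[OF nonzero]]) auto
  moreover have "card {s. poly (p - q) s = 0} \<le> degree (p - q)"
    by (rule card_poly_roots_bound[OF nonzero])
  ultimately show False using assms(5) by simp
qed

(* The variables (n, j), j < n, in the row just below the matrix entries hold a candidate
   spectrum y. As prod_j (t - y_j) and det (t I - X) are both monic of degree n, their agreement
   at the n points t = 0, ..., n - 1 already makes them equal. *)
definition spectral_certificate :: "((nat \<Rightarrow> real) \<Rightarrow> real) \<Rightarrow> nat \<Rightarrow> (nat \<times> nat \<Rightarrow> real) \<Rightarrow> real" where
  "spectral_certificate p n x = (p (\<lambda>j. x (n, j)))\<^sup>2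
     + (\<Sum>t<n. ((\<Prod>j<n. real t - x (n, j)) - poly (char_poly (mat n n x)) (real t))\<^sup>2)"

lemma polyfun_spectral_certificate:
  assumes p: "p \<in> polyfun {..<n}"
  shows "spectral_certificate p n \<in> polyfun ({..<n} \<times> {..<n} \<union> {n} \<times> {..<n})"
proof -
  have "(\<lambda>x. p (\<lambda>j. x (n, j))) \<in> polyfun ({..<n} \<times> {..<n} \<union> {n} \<times> {..<n})"
    by (rule polyfun_compose[OF p]) (auto intro: polyfun.pf_var)
  moreover have "(\<lambda>x. \<Prod>j<n. real t - x (n, j)) \<in> polyfun ({..<n} \<times> {..<n} \<union> {n} \<times> {..<n})" for t
    by (auto intro!: polyfun_prod polyfun_diff polyfun.pf_const polyfun.pf_var)
  ultimately show ?thesis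
    unfolding spectral_certificate_def[abs_def]
    by (intro polyfun.pf_add polyfun_power2 polyfun_sum polyfun_diff polyfun_poly_char_poly) auto
qed

lemma spectral_certificate_eq_0_iff:
  assumes char_poly: "char_poly (mat n n x) = (\<Prod>e\<leftarrow>es. [:- e, 1:])"
  shows "spectral_certificate p n x = 0
    \<longleftrightarrow> p (\<lambda>j. x (n, j)) = 0 \<and> mset (map (\<lambda>j. x (n, j)) [0..<n]) = mset es"
proof -
  define Y where "Y = (\<Prod>e\<leftarrow>map (\<lambda>j. x (n, j)) [0..<n]. [:- e, 1:])"
  have poly_Y: "poly Y t = (\<Prod>j<n. t - x (n, j))" for t
    by (simp add: Y_def poly_prod prod.list_conv_set_nth atLeast0LessThan)
  have char_poly_mat: "degree (char_poly (mat n n x)) = n \<and> coeff (char_poly (mat n n x)) n = 1"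
    by (rule degree_monic_char_poly) simp
  have "(\<forall>t<n. poly Y (real t) = poly (char_poly (mat n n x)) (real t)) \<longleftrightarrow> Y = char_poly (mat n n x)"
  proof
    assume agree: "\<forall>t<n. poly Y (real t) = poly (char_poly (mat n n x)) (real t)"
    have "degree Y = n"
      unfolding Y_def by (subst degree_linear_factors) simp
    moreover have "lead_coeff Y = 1"
      by (simp add: Y_def lead_coeff_prod prod.list_conv_set_nth atLeast0LessThan)
    ultimately show "Y = char_poly (mat n n x)"
      using char_poly_mat agree
      by (intro poly_eqI_degree_card[where S = "real ` {..<n}"]) (auto simp: card_image)
  qed simp
  moreover have "Y = char_poly (mat n n x) \<longleftrightarrow> mset (map (\<lambda>j. x (n, j)) [0..<n]) = mset es"
    unfolding Y_def char_poly by (rule linear_factors_eq_iff_mset)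
  moreover have "spectral_certificate p n x = 0
      \<longleftrightarrow> p (\<lambda>j. x (n, j)) = 0 \<and> (\<forall>t<n. poly Y (real t) = poly (char_poly (mat n n x)) (real t))"
    unfolding spectral_certificate_def poly_Y
    by (auto simp: add_nonneg_eq_0_iff sum_nonneg sum_nonneg_eq_0_iff)
  ultimately show ?thesis by simp
qed

lemma mem_symmetric_zero_set_iff:
  assumes p: "p \<in> polyfun {..<n}" and M: "M = {x \<in> carrier_vec n. p (\<lambda>i. x $ i) = 0}"
    and symmetric: "\<And>\<sigma>. \<sigma> permutes {..<n} \<Longrightarrow> perm_vec \<sigma> ` M = M"
    and l: "l \<in> carrier_vec n" and rearrangement: "mset (map y [0..<n]) = mset (list_of_vec l)"
  shows "l \<in> M \<longleftrightarrow> p y = 0"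
proof -
  obtain \<sigma> where \<sigma>: "\<sigma> permutes {..<n}"
    and permute: "permute_list \<sigma> (list_of_vec l) = map y [0..<n]"
    using mset_eq_permutation[OF rearrangement] l by auto
  have "\<sigma> permutes {..<length (list_of_vec l)}"
    using \<sigma> l by simp
  from permute_list_nth[OF this] have l_\<sigma>: "l $ \<sigma> i = y i" if "i < n" for i
    using arg_cong[OF permute, of "\<lambda>xs. xs ! i"] that l permutes_in_image[OF \<sigma>] by simp
  have y_l: "vec n y = perm_vec (Hilbert_Choice.inv \<sigma>) l"
    using l \<sigma> by (intro eq_vecI) (simp_all add: perm_vec_def l_\<sigma> permutes_inv_inv)
  have "l $ i = y (Hilbert_Choice.inv \<sigma> i)" if "i < n" for i
    using l_\<sigma>[of "Hilbert_Choice.inv \<sigma> i"] permutes_in_image[OF permutes_inv[OF \<sigma>]] that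
    by (simp add: permutes_inverses(1)[OF \<sigma>])
  then have l_y: "l = perm_vec \<sigma> (vec n y)"
    using l \<sigma> permutes_in_image[OF permutes_inv[OF \<sigma>]]
    by (intro eq_vecI) (simp_all add: perm_vec_def)
  have "p (\<lambda>i. vec n y $ i) = p y"
    by (rule polyfun_cong[OF p]) simp
  then have "vec n y \<in> M \<longleftrightarrow> p y = 0"
    unfolding M by auto
  moreover have "l \<in> M \<longleftrightarrow> vec n y \<in> M"
    using symmetric[OF \<sigma>] symmetric[OF permutes_inv[OF \<sigma>]] y_l l_y by blast
  ultimately show ?thesis by simp
qed

lemma eigvals_mem_iff_certificate:
  assumes p: "p \<in> polyfun {..<n}" and M: "M = {x \<in> carrier_vec n. p (\<lambda>i. x $ i) = 0}"
    and symmetric: "\<And>\<sigma>. \<sigma> permutes {..<n} \<Longrightarrow> perm_vec \<sigma> ` M = M"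
    and X: "X \<in> carrier_mat n n" and char_poly: "char_poly X = (\<Prod>e\<leftarrow>es. [:- e, 1:])"
  shows "eigvals X \<in> M \<longleftrightarrow> (\<exists>y. (\<forall>w\<in>{n} \<times> {..<n}. y w \<in> set es)
    \<and> spectral_certificate p n (override_on (\<lambda>(i, j). X $$ (i, j)) y ({n} \<times> {..<n})) = 0)"
proof -
  let ?W = "{n} \<times> {..<n}" and ?x = "\<lambda>(i, j). X $$ (i, j)"
  have mat: "mat n n (override_on ?x y ?W) = X" for y
    using X by (intro eq_matI) (auto simp: override_on_def)
  have p_y: "p (\<lambda>j. override_on ?x y ?W (n, j)) = p (\<lambda>j. y (n, j))" for y
    by (rule polyfun_cong[OF p]) (simp add: override_on_def)
  have map_y: "map (\<lambda>j. override_on ?x y ?W (n, j)) [0..<n] = map (\<lambda>j. y (n, j)) [0..<n]" for y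
    by (simp add: override_on_def)
  have certificate: "spectral_certificate p n (override_on ?x y ?W) = 0
      \<longleftrightarrow> p (\<lambda>j. y (n, j)) = 0 \<and> mset (map (\<lambda>j. y (n, j)) [0..<n]) = mset es" for y
    using spectral_certificate_eq_0_iff[of n "override_on ?x y ?W" es p]
    by (simp only: mat char_poly p_y map_y simp_thms)
  note eigvals = eigvals_linear_factors[OF X char_poly]
  note mem_M_iff = mem_symmetric_zero_set_iff[OF p M symmetric eigvals(1)]
  show ?thesis
  proof
    assume "eigvals X \<in> M"
    define y where "y = (\<lambda>(i :: nat, j). eigvals X $ j)"
    have spectrum: "map (\<lambda>j. y (n, j)) [0..<n] = list_of_vec (eigvals X)"
      using eigvals(1) by (simp add: y_def list_of_vec_map)
    then have "p (\<lambda>j. y (n, j)) = 0"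
      using mem_M_iff[of "\<lambda>j. y (n, j)"] \<open>eigvals X \<in> M\<close> by (simp only: spectrum simp_thms)
    then have "spectral_certificate p n (override_on ?x y ?W) = 0"
      unfolding certificate spectrum eigvals(2) by simp
    moreover have "\<forall>w\<in>?W. y w \<in> set es"
      using arg_cong[OF spectrum, of set] mset_eq_setD[OF eigvals(2)] by auto
    ultimately show "\<exists>y. (\<forall>w\<in>?W. y w \<in> set es) \<and> spectral_certificate p n (override_on ?x y ?W) = 0"
      by blast
  next
    assume "\<exists>y. (\<forall>w\<in>?W. y w \<in> set es) \<and> spectral_certificate p n (override_on ?x y ?W) = 0"
    then obtain y where "spectral_certificate p n (override_on ?x y ?W) = 0"
      by blast
    then have "p (\<lambda>j. y (n, j)) = 0" "mset (map (\<lambda>j. y (n, j)) [0..<n]) = mset es"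
      unfolding certificate by auto
    then show "eigvals X \<in> M"
      using mem_M_iff[of "\<lambda>j. y (n, j)"] eigvals(2) by simp
  qed
qed

theorem proposition1p1:
  fixes n :: nat and p :: "(nat \<Rightarrow> real) \<Rightarrow> real" and M :: "real vec set"
  assumes "p \<in> polyfun {..<n}"
    and "M = {x \<in> carrier_vec n. p (\<lambda>i. x $ i) = 0}"
    and "\<And>\<sigma>. \<sigma> permutes {..<n} \<Longrightarrow> perm_vec \<sigma> ` M = M"
  shows "\<exists>q \<in> polyfun ({..<n} \<times> {..<n}).
           {X \<in> carrier_mat n n. transpose_mat X = X \<and> eigvals X \<in> M}
         = {X \<in> carrier_mat n n. transpose_mat X = X \<and> q (\<lambda>(i, j). X $$ (i, j)) = 0}"
proof -
  obtain q where q: "q \<in> polyfun ({..<n} \<times> {..<n})"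
    and q_zero: "\<And>x es. char_poly (mat n n x) = (\<Prod>e\<leftarrow>es. [:- e, 1:]) \<Longrightarrow> q x = 0 \<longleftrightarrow>
      (\<exists>y. (\<forall>w\<in>{n} \<times> {..<n}. y w \<in> set es)
        \<and> spectral_certificate p n (override_on x y ({n} \<times> {..<n})) = 0)"
    using eliminate_variables[of "{n} \<times> {..<n}" "spectral_certificate p n" "{..<n} \<times> {..<n}" n]
      polyfun_spectral_certificate[OF assms(1)] by auto
  have "eigvals X \<in> M \<longleftrightarrow> q (\<lambda>(i, j). X $$ (i, j)) = 0"
    if X: "X \<in> carrier_mat n n" and symmetric: "transpose_mat X = X" for X
  proof -
    obtain es where char_poly: "char_poly X = (\<Prod>e\<leftarrow>es. [:- e, 1:])"
      using symmetric_mat_char_poly_linear_factors[OF X symmetric] .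
    have "mat n n (\<lambda>(i, j). X $$ (i, j)) = X"
      using X by (intro eq_matI) auto
    then show ?thesis
      using q_zero[of "\<lambda>(i, j). X $$ (i, j)" es] char_poly
        eigvals_mem_iff_certificate[OF assms X char_poly]
      by simp
  qed
  then show ?thesis
    by (intro bexI[OF _ q]) auto
qed

end
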